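(* Let $d\ge2$, $\kappa,l>0$ and $V(\phi)=-\frac{d(d-1)}{2\kappa^2l^2}\cosh\big(\frac23\sqrt{\frac{d\kappa^2}{d-1}}\phi\big)$. Let $\rho=\tanh\big(\frac23\sqrt{\frac{d\kappa^2}{d-1}}\phi\big)$, $\psi=\sqrt{\frac{d\kappa^2}{d-1}}\phi$, and for $\nu\ge-1$ let $$W(\phi;\nu)=-\frac{d-1}{\kappa^2l}\frac{1}{(1-\rho^2)^{3/4}}\frac{1-\rho^2+\sqrt{1+2\nu\rho+\rho^2}}{\sqrt{2\big(1+\nu\rho+\sqrt{1+2\nu\rho+\rho^2}\big)}}.$$ Then: (i) for every $\nu\ge-1$, $W(\phi;\nu)=-\frac{d-1}{\kappa^2l}\big(1+\frac16\psi^2+\frac1{27}\nu\psi^3+O(\psi^4)\big)$ as $\phi\to0$; (ii) for every $\phi>0$, $\lim_{\nu\to\infty}W(\phi;\nu)=W_\infty(\phi):=-\frac{d-1}{\kappa^2l}(1-\rho^2)^{-3/4}$; (iii) $W_\infty$ satisfies $V=\frac12\big(W_\infty'^2-\frac{d\kappa^2}{d-1}W_\infty^2\big)$ and $W_\infty=-\frac{d-1}{\kappa^2l}\big(1+\frac13\psi^2+O(\psi^4)\big)$. In particular (with $m^2l^2=-2d^2/9$, $\Delta_-=d/3$, $\Delta_+=2d/3$), each $W(\cdot;\nu)$ with finite $\nu$ has leading behaviour $-\frac{d-1}{\kappa^2l}-\frac{\Delta_-}{2l}\phi^2$, whereas $W_\infty$ has leading behaviour $-\frac{d-1}{\kappa^2l}-\frac{\Delta_+}{2l}\phi^2$.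 *)

theory Defs
  imports "HOL-Analysis.Analysis" "HOL-Library.Landau_Symbols"
begin

definition cc :: "nat \<Rightarrow> real \<Rightarrow> real" where
  "cc d \<kappa> = sqrt (real d * \<kappa>\<^sup>2 / (real d - 1))"

definition pot :: "nat \<Rightarrow> real \<Rightarrow> real \<Rightarrow> real \<Rightarrow> real" where
  "pot d \<kappa> l \<phi> = - (real d * (real d - 1)) / (2 * \<kappa>\<^sup>2 * l\<^sup>2) * cosh (2/3 * cc d \<kappa> * \<phi>)"

definition rho :: "nat \<Rightarrow> real \<Rightarrow> real \<Rightarrow> real" where
  "rho d \<kappa> \<phi> = tanh (2/3 * cc d \<kappa> * \<phi>)"

definition psi :: "nat \<Rightarrow> real \<Rightarrow> real \<Rightarrow> real" where
  "psi d \<kappa> \<phi> = cc d \<kappa> * \<phi>"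

definition Wsup :: "nat \<Rightarrow> real \<Rightarrow> real \<Rightarrow> real \<Rightarrow> real \<Rightarrow> real" where
  "Wsup d \<kappa> l \<nu> \<phi> =
     (let \<rho> = rho d \<kappa> \<phi>; s = sqrt (1 + 2 * \<nu> * \<rho> + \<rho>\<^sup>2) in
      - (real d - 1) / (\<kappa>\<^sup>2 * l) * (1 / (1 - \<rho>\<^sup>2) powr (3/4))
        * ((1 - \<rho>\<^sup>2 + s) / sqrt (2 * (1 + \<nu> * \<rho> + s))))"

definition Winf :: "nat \<Rightarrow> real \<Rightarrow> real \<Rightarrow> real \<Rightarrow> real" where
  "Winf d \<kappa> l \<phi> = - (real d - 1) / (\<kappa>\<^sup>2 * l) * (1 - (rho d \<kappa> \<phi>)\<^sup>2) powr (-3/4)"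

definition Delta_minus :: "nat \<Rightarrow> real" where "Delta_minus d = real d / 3"
definition Delta_plus :: "nat \<Rightarrow> real" where "Delta_plus d = 2 * real d / 3"

end

theory Submission
  imports Defs "HOL-Real_Asymp.Real_Asymp"
begin

text \<open>Up to the constant factor \<open>-(d-1)/(\<kappa>\<^sup>2 l)\<close>, both superpotentials are universal functions
  of \<open>\<psi>\<close>: \<open>W(\<phi>;\<nu>)\<close> is a profile \<open>w\<^sub>\<nu>(\<psi>)\<close>, and since \<open>1 - tanh\<^sup>2 = cosh\<^sup>-\<^sup>2\<close>, \<open>W\<^sub>\<infinity>\<close> is
  \<open>cosh(2\<psi>/3)\<^sup>3\<^sup>/\<^sup>2\<close>. The Taylor expansions of the profiles at \<open>0\<close> are computed by multiseries
  expansion and transported to \<open>\<phi>\<close> along the linear change of variables \<open>\<psi> = c \<phi>\<close>; they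
  need no restriction on \<open>\<nu>\<close>, since near \<open>\<psi> = 0\<close> all radicands are close to \<open>1\<close> or \<open>4\<close>. For
  \<open>\<rho> > 0\<close> the only \<open>\<nu>\<close>-dependent factor of \<open>w\<^sub>\<nu>\<close> behaves like \<open>\<surd>(2\<nu>\<rho>) / \<surd>(2\<nu>\<rho>)\<close>, hence
  tends to \<open>1\<close>. For \<open>f(x) = cosh(2x/3)\<^sup>3\<^sup>/\<^sup>2\<close> one has \<open>f' = cosh(2x/3)\<^sup>1\<^sup>/\<^sup>2 sinh(2x/3)\<close>, so
  \<open>f'\<^sup>2 - f\<^sup>2 = -cosh(2x/3)\<close>; rescaling gives the equation for the potential. Finally, the
  \<open>\<psi>\<^sup>2\<close>-coefficients \<open>1/6\<close> and \<open>1/3\<close>, multiplied by \<open>-(d-1)c\<^sup>2/(\<kappa>\<^sup>2 l) = -d/l\<close>, are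
  \<open>-\<Delta>\<^sub>-/(2l)\<close> and \<open>-\<Delta>\<^sub>+/(2l)\<close>.\<close>

definition W_profile :: "real \<Rightarrow> real \<Rightarrow> real" where
  "W_profile \<nu> x = (let \<rho> = tanh (2/3 * x); s = sqrt (1 + 2 * \<nu> * \<rho> + \<rho>\<^sup>2) in
      1 / (1 - \<rho>\<^sup>2) powr (3/4) * ((1 - \<rho>\<^sup>2 + s) / sqrt (2 * (1 + \<nu> * \<rho> + s))))"

definition Winf_profile :: "real \<Rightarrow> real" where
  "Winf_profile x = cosh (2/3 * x) powr (3/2)"

lemma one_minus_tanh_square_powr:
  fixes x :: real
  shows "(1 - (tanh x)\<^sup>2) powr a = cosh x powr (-2 * a)"
proof -
  have "cosh x ^ 2 \<noteq> 0" by simp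
  then have "1 - (tanh x)\<^sup>2 = (cosh x ^ 2 - sinh x ^ 2) / cosh x ^ 2"
    by (simp add: tanh_def power_divide diff_divide_distrib)
  also have "\<dots> = cosh x powr (-2)"
    by (simp add: cosh_square_eq powr_minus powr_realpow divide_inverse)
  finally show ?thesis by (simp add: powr_powr)
qed

lemma filterlim_mult_left_at_0:
  fixes c :: real
  assumes "c \<noteq> 0"
  shows "filterlim (\<lambda>x. c * x) (at 0) (at 0)"
  using assms by (auto intro!: filterlim_atI tendsto_eq_intros simp: eventually_at_filter)

lemma smallo_square_of_cubic_expansion:
  fixes f :: "real \<Rightarrow> real"
  assumes "(\<lambda>x. f x - (a + b * x\<^sup>2 + e * x ^ 3)) \<in> O[at 0](\<lambda>x. x ^ 4)"
  shows "(\<lambda>x. f x - (a + b * x\<^sup>2)) \<in> o[at 0](\<lambda>x. x\<^sup>2)"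
proof -
  have "(\<lambda>x::real. x ^ 4) \<in> o[at 0](\<lambda>x. x\<^sup>2)" by real_asymp
  with assms have "(\<lambda>x. f x - (a + b * x\<^sup>2 + e * x ^ 3)) \<in> o[at 0](\<lambda>x. x\<^sup>2)"
    by (rule landau_o.big_small_trans)
  moreover have "(\<lambda>x::real. e * x ^ 3) \<in> o[at 0](\<lambda>x. x\<^sup>2)"
    by (cases "e = 0") (simp_all, real_asymp)
  ultimately have "(\<lambda>x. (f x - (a + b * x\<^sup>2 + e * x ^ 3)) + e * x ^ 3) \<in> o[at 0](\<lambda>x. x\<^sup>2)"
    by (rule sum_in_smallo)
  then show ?thesis by (simp add: algebra_simps)
qed

lemma W_profile_expansion:
  "(\<lambda>x. W_profile \<nu> x - (1 + x\<^sup>2 / 6 + \<nu> * x ^ 3 / 27)) \<in> O[at 0](\<lambda>x. x ^ 4)"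
  unfolding W_profile_def Let_def by (real_asymp simp add: field_simps power2_eq_square)

lemma Winf_profile_expansion:
  "(\<lambda>x. Winf_profile x - (1 + x\<^sup>2 / 3)) \<in> O[at 0](\<lambda>x. x ^ 4)"
  unfolding Winf_profile_def by real_asymp

lemma W_profile_tendsto_Winf_profile:
  assumes "0 < x"
  shows "((\<lambda>\<nu>. W_profile \<nu> x) \<longlongrightarrow> Winf_profile x) at_top"
proof -
  define \<rho> where "\<rho> = tanh (2/3 * x)"
  have "0 < \<rho>" unfolding \<rho>_def using assms by simp
  then have "((\<lambda>\<nu>. (1 - \<rho>\<^sup>2 + sqrt (1 + 2 * \<nu> * \<rho> + \<rho>\<^sup>2))
                 / sqrt (2 * (1 + \<nu> * \<rho> + sqrt (1 + 2 * \<nu> * \<rho> + \<rho>\<^sup>2)))) \<longlongrightarrow> 1) at_top"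
    by real_asymp
  then have "((\<lambda>\<nu>. W_profile \<nu> x) \<longlongrightarrow> 1 / (1 - \<rho>\<^sup>2) powr (3/4) * 1) at_top"
    unfolding W_profile_def Let_def \<rho>_def[symmetric] by (rule tendsto_mult_left)
  moreover have "1 / (1 - \<rho>\<^sup>2) powr (3/4) = Winf_profile x"
    unfolding \<rho>_def Winf_profile_def one_minus_tanh_square_powr by (simp add: powr_minus_divide)
  ultimately show ?thesis by simp
qed

lemma Winf_profile_has_real_derivative:
  "(Winf_profile has_real_derivative cosh (2/3 * x) powr (1/2) * sinh (2/3 * x)) (at x)"
  unfolding Winf_profile_def by (auto intro!: derivative_eq_intros)

lemma Winf_profile_hamilton_jacobi:
  "(deriv Winf_profile x)\<^sup>2 - (Winf_profile x)\<^sup>2 = - cosh (2/3 * x)"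
proof -
  define y where "y = 2/3 * x"
  have "(cosh y powr (1/2))\<^sup>2 = cosh y" "(cosh y powr (3/2))\<^sup>2 = cosh y ^ 3"
    by (simp_all add: powr_power)
  then have "(deriv Winf_profile x)\<^sup>2 - (Winf_profile x)\<^sup>2 = cosh y * ((sinh y)\<^sup>2 - (cosh y)\<^sup>2)"
    unfolding DERIV_imp_deriv[OF Winf_profile_has_real_derivative] Winf_profile_def y_def[symmetric]
    by (simp add: power_mult_distrib algebra_simps power3_eq_cube power2_eq_square)
  then show ?thesis by (simp add: cosh_square_eq y_def)
qed

lemma cc_pos:
  assumes "1 < d" "\<kappa> \<noteq> 0"
  shows "0 < cc d \<kappa>"
  using assms by (simp add: cc_def)

lemma cc_square:
  assumes "1 < d"
  shows "(cc d \<kappa>)\<^sup>2 = real d * \<kappa>\<^sup>2 / (real d - 1)"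
  using assms by (simp add: cc_def)

lemma filterlim_psi_at_0:
  assumes "1 < d" "\<kappa> \<noteq> 0"
  shows "filterlim (psi d \<kappa>) (at 0) (at 0)"
  using filterlim_mult_left_at_0[of "cc d \<kappa>"] cc_pos[OF assms]
  by (simp add: psi_def[abs_def])

lemma Wsup_eq_W_profile:
  "Wsup d \<kappa> l \<nu> \<phi> = - (real d - 1) / (\<kappa>\<^sup>2 * l) * W_profile \<nu> (psi d \<kappa> \<phi>)"
  unfolding Wsup_def W_profile_def rho_def psi_def Let_def by (simp add: mult.assoc)

lemma Winf_eq_Winf_profile:
  "Winf d \<kappa> l \<phi> = - (real d - 1) / (\<kappa>\<^sup>2 * l) * Winf_profile (psi d \<kappa> \<phi>)"
  unfolding Winf_def Winf_profile_def rho_def psi_def one_minus_tanh_square_powr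
  by (simp add: mult.assoc)

lemma Wsup_expansion:
  assumes "1 < d" "\<kappa> \<noteq> 0"
  shows "(\<lambda>\<phi>. Wsup d \<kappa> l \<nu> \<phi> - (- (real d - 1) / (\<kappa>\<^sup>2 * l)
            * (1 + (psi d \<kappa> \<phi>)\<^sup>2 / 6 + \<nu> * (psi d \<kappa> \<phi>)^3 / 27)))
         \<in> O[at 0](\<lambda>\<phi>. (psi d \<kappa> \<phi>)^4)"
proof -
  define B where "B = - (real d - 1) / (\<kappa>\<^sup>2 * l)"
  have "(\<lambda>\<phi>. W_profile \<nu> (psi d \<kappa> \<phi>)
           - (1 + (psi d \<kappa> \<phi>)\<^sup>2 / 6 + \<nu> * (psi d \<kappa> \<phi>)^3 / 27))
        \<in> O[at 0](\<lambda>\<phi>. (psi d \<kappa> \<phi>)^4)"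
    using landau_o.big.compose[OF W_profile_expansion filterlim_psi_at_0[OF assms]] .
  then have "(\<lambda>\<phi>. B * (W_profile \<nu> (psi d \<kappa> \<phi>)
           - (1 + (psi d \<kappa> \<phi>)\<^sup>2 / 6 + \<nu> * (psi d \<kappa> \<phi>)^3 / 27)))
        \<in> O[at 0](\<lambda>\<phi>. (psi d \<kappa> \<phi>)^4)"
    by (cases "B = 0") simp_all
  then show ?thesis
    unfolding Wsup_eq_W_profile B_def[symmetric] by (simp add: algebra_simps)
qed

lemma Winf_expansion:
  assumes "1 < d" "\<kappa> \<noteq> 0"
  shows "(\<lambda>\<phi>. Winf d \<kappa> l \<phi> - (- (real d - 1) / (\<kappa>\<^sup>2 * l) * (1 + (psi d \<kappa> \<phi>)\<^sup>2 / 3)))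
         \<in> O[at 0](\<lambda>\<phi>. (psi d \<kappa> \<phi>)^4)"
proof -
  define B where "B = - (real d - 1) / (\<kappa>\<^sup>2 * l)"
  have "(\<lambda>\<phi>. Winf_profile (psi d \<kappa> \<phi>) - (1 + (psi d \<kappa> \<phi>)\<^sup>2 / 3))
        \<in> O[at 0](\<lambda>\<phi>. (psi d \<kappa> \<phi>)^4)"
    using landau_o.big.compose[OF Winf_profile_expansion filterlim_psi_at_0[OF assms]] .
  then have "(\<lambda>\<phi>. B * (Winf_profile (psi d \<kappa> \<phi>) - (1 + (psi d \<kappa> \<phi>)\<^sup>2 / 3)))
        \<in> O[at 0](\<lambda>\<phi>. (psi d \<kappa> \<phi>)^4)"
    by (cases "B = 0") simp_all
  then show ?thesis
    unfolding Winf_eq_Winf_profile B_def[symmetric] by (simp add: algebra_simps)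
qed

lemma Wsup_tendsto_Winf:
  assumes "1 < d" "\<kappa> \<noteq> 0" "0 < \<phi>"
  shows "((\<lambda>\<nu>. Wsup d \<kappa> l \<nu> \<phi>) \<longlongrightarrow> Winf d \<kappa> l \<phi>) at_top"
proof -
  have "0 < psi d \<kappa> \<phi>"
    using cc_pos[OF assms(1,2)] assms(3) by (simp add: psi_def)
  then show ?thesis
    unfolding Wsup_eq_W_profile Winf_eq_Winf_profile
    by (intro tendsto_mult_left W_profile_tendsto_Winf_profile)
qed

lemma Winf_hamilton_jacobi:
  assumes "1 < d" "\<kappa> \<noteq> 0"
  shows "Winf d \<kappa> l differentiable (at \<phi>) \<and>
         pot d \<kappa> l \<phi> = 1/2 * ((deriv (Winf d \<kappa> l) \<phi>)\<^sup>2
                             - real d * \<kappa>\<^sup>2 / (real d - 1) * (Winf d \<kappa> l \<phi>)\<^sup>2)"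
proof -
  define B c where "B = - (real d - 1) / (\<kappa>\<^sup>2 * l)" and "c = cc d \<kappa>"
  have W: "Winf d \<kappa> l = (\<lambda>\<phi>. B * Winf_profile (c * \<phi>))"
    by (simp add: fun_eq_iff Winf_eq_Winf_profile psi_def B_def c_def)
  have D: "(Winf d \<kappa> l has_real_derivative B * (deriv Winf_profile (c * \<phi>) * c)) (at \<phi>)"
    unfolding W DERIV_imp_deriv[OF Winf_profile_has_real_derivative]
    by (intro DERIV_cmult DERIV_chain2[OF Winf_profile_has_real_derivative])
       (auto intro!: derivative_eq_intros)
  have "1/2 * ((deriv (Winf d \<kappa> l) \<phi>)\<^sup>2 - c\<^sup>2 * (Winf d \<kappa> l \<phi>)\<^sup>2)
      = 1/2 * B\<^sup>2 * c\<^sup>2 * ((deriv Winf_profile (c * \<phi>))\<^sup>2 - (Winf_profile (c * \<phi>))\<^sup>2)"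
    unfolding DERIV_imp_deriv[OF D] by (simp add: W algebra_simps power_mult_distrib)
  also have "\<dots> = 1/2 * (real d * (real d - 1) / (\<kappa>\<^sup>2 * l\<^sup>2)) * (- cosh (2/3 * (c * \<phi>)))"
  proof -
    have "B\<^sup>2 * c\<^sup>2 = real d * (real d - 1) / (\<kappa>\<^sup>2 * l\<^sup>2)"
      unfolding B_def c_def cc_square[OF assms(1)] using assms
      by (cases "l = 0") (simp_all add: field_simps power2_eq_square)
    then show ?thesis by (simp add: Winf_profile_hamilton_jacobi)
  qed
  also have "\<dots> = pot d \<kappa> l \<phi>"
    unfolding pot_def c_def by (simp add: mult.assoc)
  finally show ?thesis
    using D cc_square[OF assms(1)] real_differentiable_def c_def by auto
qed

lemma Wsup_leading_order:
  assumes "1 < d" "\<kappa> \<noteq> 0"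
  shows "(\<lambda>\<phi>. Wsup d \<kappa> l \<nu> \<phi> - (- (real d - 1) / (\<kappa>\<^sup>2 * l) - Delta_minus d / (2 * l) * \<phi>\<^sup>2))
         \<in> o[at 0](\<lambda>\<phi>. \<phi>\<^sup>2)"
proof -
  define B c where "B = - (real d - 1) / (\<kappa>\<^sup>2 * l)" and "c = cc d \<kappa>"
  have "c \<noteq> 0" using cc_pos[OF assms] by (simp add: c_def)
  then have "(\<lambda>\<phi>. Wsup d \<kappa> l \<nu> \<phi> - (B + B * c\<^sup>2 / 6 * \<phi>\<^sup>2 + B * \<nu> * c ^ 3 / 27 * \<phi> ^ 3))
             \<in> O[at 0](\<lambda>\<phi>. \<phi> ^ 4)"
    using Wsup_expansion[OF assms, of l \<nu>]
    by (simp add: psi_def B_def c_def power_mult_distrib algebra_simps)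
  then have "(\<lambda>\<phi>. Wsup d \<kappa> l \<nu> \<phi> - (B + B * c\<^sup>2 / 6 * \<phi>\<^sup>2)) \<in> o[at 0](\<lambda>\<phi>. \<phi>\<^sup>2)"
    by (rule smallo_square_of_cubic_expansion)
  moreover have "B * c\<^sup>2 / 6 = - Delta_minus d / (2 * l)"
    unfolding B_def c_def cc_square[OF assms(1)] Delta_minus_def
    using assms by (cases "l = 0") (simp_all add: field_simps)
  ultimately show ?thesis unfolding B_def[symmetric] by simp
qed

lemma Winf_leading_order:
  assumes "1 < d" "\<kappa> \<noteq> 0"
  shows "(\<lambda>\<phi>. Winf d \<kappa> l \<phi> - (- (real d - 1) / (\<kappa>\<^sup>2 * l) - Delta_plus d / (2 * l) * \<phi>\<^sup>2))
         \<in> o[at 0](\<lambda>\<phi>. \<phi>\<^sup>2)"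
proof -
  define B c where "B = - (real d - 1) / (\<kappa>\<^sup>2 * l)" and "c = cc d \<kappa>"
  have "c \<noteq> 0" using cc_pos[OF assms] by (simp add: c_def)
  then have "(\<lambda>\<phi>. Winf d \<kappa> l \<phi> - (B + B * c\<^sup>2 / 3 * \<phi>\<^sup>2 + 0 * \<phi> ^ 3)) \<in> O[at 0](\<lambda>\<phi>. \<phi> ^ 4)"
    using Winf_expansion[OF assms, of l]
    by (simp add: psi_def B_def c_def power_mult_distrib algebra_simps)
  then have "(\<lambda>\<phi>. Winf d \<kappa> l \<phi> - (B + B * c\<^sup>2 / 3 * \<phi>\<^sup>2)) \<in> o[at 0](\<lambda>\<phi>. \<phi>\<^sup>2)"
    by (rule smallo_square_of_cubic_expansion)
  moreover have "B * c\<^sup>2 / 3 = - Delta_plus d / (2 * l)"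
    unfolding B_def c_def cc_square[OF assms(1)] Delta_plus_def
    using assms by (cases "l = 0") (simp_all add: field_simps)
  ultimately show ?thesis unfolding B_def[symmetric] by simp
qed

theorem mainTheorem5:
  fixes d :: nat and \<kappa> l :: real
  assumes "d \<ge> 2" and "\<kappa> > 0" and "l > 0"
  shows
    "(\<forall>\<nu>::real. \<nu> \<ge> -1 \<longrightarrow>
       (\<lambda>\<phi>. Wsup d \<kappa> l \<nu> \<phi> - (- (real d - 1) / (\<kappa>\<^sup>2 * l)
          * (1 + (psi d \<kappa> \<phi>)\<^sup>2 / 6 + \<nu> * (psi d \<kappa> \<phi>)^3 / 27)))
       \<in> O[at 0](\<lambda>\<phi>. (psi d \<kappa> \<phi>)^4))
   \<and> (\<forall>\<phi>::real. \<phi> > 0 \<longrightarrow> ((\<lambda>\<nu>. Wsup d \<kappa> l \<nu> \<phi>) \<longlongrightarrow> Winf d \<kappa> l \<phi>) at_top)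
   \<and> (\<forall>\<phi>::real. Winf d \<kappa> l differentiable (at \<phi>) \<and>
        pot d \<kappa> l \<phi> = 1/2 * ((deriv (Winf d \<kappa> l) \<phi>)\<^sup>2
                      - real d * \<kappa>\<^sup>2 / (real d - 1) * (Winf d \<kappa> l \<phi>)\<^sup>2))
   \<and> (\<lambda>\<phi>. Winf d \<kappa> l \<phi> - (- (real d - 1) / (\<kappa>\<^sup>2 * l) * (1 + (psi d \<kappa> \<phi>)\<^sup>2 / 3)))
       \<in> O[at 0](\<lambda>\<phi>. (psi d \<kappa> \<phi>)^4)
   \<and> (\<forall>\<nu>::real. \<nu> \<ge> -1 \<longrightarrow>
       (\<lambda>\<phi>. Wsup d \<kappa> l \<nu> \<phi> - (- (real d - 1) / (\<kappa>\<^sup>2 * l) - Delta_minus d / (2 * l) * \<phi>\<^sup>2))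
       \<in> o[at 0](\<lambda>\<phi>. \<phi>\<^sup>2))
   \<and> (\<lambda>\<phi>. Winf d \<kappa> l \<phi> - (- (real d - 1) / (\<kappa>\<^sup>2 * l) - Delta_plus d / (2 * l) * \<phi>\<^sup>2))
       \<in> o[at 0](\<lambda>\<phi>. \<phi>\<^sup>2)"
proof -
  have d: "1 < d" and \<kappa>: "\<kappa> \<noteq> 0" using assms by auto
  show ?thesis
    using Wsup_expansion[OF d \<kappa>] Wsup_tendsto_Winf[OF d \<kappa>] Winf_hamilton_jacobi[OF d \<kappa>]
      Winf_expansion[OF d \<kappa>] Wsup_leading_order[OF d \<kappa>] Winf_leading_order[OF d \<kappa>]
    by blast
qed

end
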